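(* Let $H$ be a real Hilbert space, $I=\{1,\dots,M\}$, let $f_i,h_i,T_i$ ($i\in I$) satisfy Assumption (A1)–(A4) and the parameters satisfy Condition (C) (described below). Consider the sequences generated by the Distributed Accelerated Parallel Algorithm below, and assume that for each $i\in I$ the sequence $\{y^{(i)}_n\}$ is bounded. Then the sequences $\{T_i(y^{(i)}_n)\}$, $\{x_n\}$, $\{w^{(i)}_n\}$, $\{z_n\}$ and $\{d^{(i)}_n\}$ ($i\in I$) are bounded.
   Context: Assumption (A1): each $f_i:H\to\mathbb{R}$ is continuous and convex. (A2): each $h_i:H\to\mathbb{R}$ is convex and Fréchet differentiable, and $\nabla h_i$ is $(1/L_i)$-Lipschitz continuous for some $L_i>0$. (A3): each $T_i:H\to H$ is firmly nonexpansive, i.e. $\|T_ix-T_iy\|^2\le\langle T_ix-T_iy,x-y\rangle$ for all $x,y$. (A4): $S=\bigcap_{i=1}^M\mathrm{Fix}\,T_i\neq\emptyset$ and, with $\psi=\sum_{i=1}^M(f_i+h_i)$, $\Omega=\{\hat x\in S:\psi(\hat x)=\min_{x\in S}\psi(x)\}\neq\emptyset$. Condition (C): $\{\theta_n\},\{\lambda_n\},\{\beta_n\},\{\alpha_n\}$ are decreasing real sequences converging to $0$ with $\theta_n\in[0,1)$, $\lambda_n\in(0,2\min_{i\in I}L_i]$, $\beta_n\in(0,1]$, $\alpha_n\in(0,1]$, and: (C1) $\sum_n\alpha_n=\infty$; (C2) $\lim_n\frac{1}{\alpha_{n+1}}\big|\frac{1}{\lambda_{n+1}}-\frac{1}{\lambda_n}\big|=0$;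 (C3) $\lim_n\frac{1}{\lambda_{n+1}}\big|1-\frac{\alpha_n}{\alpha_{n+1}}\big|=0$; (C4) $\lim_n\frac{\alpha_n}{\lambda_n}=0$; (C5) $\lim_n\frac{\theta_n}{\alpha_{n+1}\lambda_{n+1}}=0$; (C6) $\frac{\lambda_n}{\lambda_{n+1}}\le\sigma$ for some $\sigma\ge1$; (C7) $\lim_n\frac{\beta_n}{\alpha_{n+1}}=0$. $\mathrm{prox}_{\lambda g}(x)=\arg\min_y\{g(y)+\frac{1}{2\lambda}\|x-y\|^2\}$. Distributed Accelerated Parallel Algorithm: choose $z_0,x_0,x_1\in H$, $u^{(i)}\in H$ and set $d^{(i)}_1=-\nabla h_i(z_0)$ ($i\in I$). For $n=1,2,\dots$: compute $z_n=x_n+\theta_n(x_n-x_{n-1})$; for $i=1,\dots,M$ compute $d^{(i)}_{n+1}=-\nabla h_i(z_n)+\beta_nd^{(i)}_n$, $y^{(i)}_n=\mathrm{prox}_{\lambda_nf_i}(z_n+\lambda_nd^{(i)}_{n+1})$, $w^{(i+1)}_n=\alpha_nu^{(i)}+(1-\alpha_n)T_i(y^{(i)}_n)$; then set $x_{n+1}=\frac1M\sum_{i=1}^Mw^{(i+1)}_n$. *)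

theory Defs
  imports "HOL-Analysis.Analysis"
begin

definition prox :: "real \<Rightarrow> ('a::real_normed_vector \<Rightarrow> real) \<Rightarrow> 'a \<Rightarrow> 'a" where
  "prox lam g x = (THE y. \<forall>v. g y + (1 / (2 * lam)) * (norm (x - y))\<^sup>2
                              \<le> g v + (1 / (2 * lam)) * (norm (x - v))\<^sup>2)"

definition firmly_nonexpansive :: "('a::real_inner \<Rightarrow> 'a) \<Rightarrow> bool" where
  "firmly_nonexpansive T \<longleftrightarrow>
     (\<forall>x y. (norm (T x - T y))\<^sup>2 \<le> inner (T x - T y) (x - y))"

end

theory Submission
  imports Defs
begin

(* Firmly nonexpansive maps and Lipschitz gradients send bounded sets to bounded sets, so the
   bound on y passes to T(y), then to the convex combinations w and their mean x, to the
   inertial extrapolation z (as 0 <= theta < 1), and to the gradients at z.  The directions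
   satisfy |d (n+1)| <= K + beta n |d n| with beta n -> 0, which keeps them bounded. *)

lemma firmly_nonexpansive_imp_lipschitz:
  assumes "firmly_nonexpansive T"
  shows "1-lipschitz_on X T"
proof (rule lipschitz_onI)
  fix a b
  have "(norm (T a - T b))\<^sup>2 \<le> norm (T a - T b) * norm (a - b)"
    using assms norm_cauchy_schwarz[of "T a - T b" "a - b"]
    unfolding firmly_nonexpansive_def by (meson order_trans)
  then have "norm (T a - T b) \<le> norm (a - b)"
    by (cases "T a = T b") (auto simp: power2_eq_square)
  then show "dist (T a) (T b) \<le> 1 * dist a b"
    by (simp add: dist_norm)
qed simp

lemma lipschitz_on_bounded_image:
  assumes "C-lipschitz_on S f" "bounded S"
  shows "bounded (f ` S)"
proof (cases "S = {}")
  case False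
  then obtain a where "a \<in> S" by blast
  from \<open>bounded S\<close> obtain e where e: "\<And>y. y \<in> S \<Longrightarrow> dist a y \<le> e"
    unfolding bounded_any_center[of S a] by blast
  have "dist (f a) (f y) \<le> C * e" if "y \<in> S" for y
    using lipschitz_onD[OF assms(1) \<open>a \<in> S\<close> that] e[OF that] lipschitz_on_nonneg[OF assms(1)]
    by (meson mult_left_mono order_trans)
  then show ?thesis
    unfolding bounded_any_center[of _ "f a"] by blast
qed simp

lemma bounded_range_if_eventually_in:
  fixes x :: "nat \<Rightarrow> 'a::metric_space"
  assumes "eventually (\<lambda>n. x n \<in> S) sequentially" "bounded S"
  shows "bounded (range x)"
proof -
  obtain N where N: "\<And>n. n \<ge> N \<Longrightarrow> x n \<in> S"
    using assms(1) unfolding eventually_sequentially by blast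
  have "bounded (x ` {..<N} \<union> S)"
    using assms(2) by (simp add: finite_imp_bounded)
  moreover have "range x \<subseteq> x ` {..<N} \<union> S"
  proof
    fix v assume "v \<in> range x"
    then obtain n where "v = x n" by blast
    then show "v \<in> x ` {..<N} \<union> S"
      using N[of n] by (cases "n < N") auto
  qed
  ultimately show ?thesis
    by (rule bounded_subset)
qed

lemma bounded_convex_combination_seq:
  fixes b w :: "nat \<Rightarrow> 'a::real_normed_vector"
  assumes "bounded {b n | n. P n}" "\<And>n. P n \<Longrightarrow> t n \<in> {0..1}"
    and "\<And>n. P n \<Longrightarrow> w n = t n *\<^sub>R a + (1 - t n) *\<^sub>R b n"
  shows "bounded {w n | n. P n}"
proof (rule bounded_subset)
  show "bounded (convex hull (insert a {b n | n. P n}))"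
    using assms(1) by (simp add: bounded_convex_hull)
  show "{w n | n. P n} \<subseteq> convex hull (insert a {b n | n. P n})"
  proof clarify
    fix n assume "P n"
    then show "w n \<in> convex hull (insert a {b n | n. P n})"
      unfolding assms(3)[OF \<open>P n\<close>] using assms(2)[OF \<open>P n\<close>]
      by (intro convexD[OF convex_convex_hull] hull_inc) auto
  qed
qed

lemma mean_in_convex_hull:
  fixes v :: "'b \<Rightarrow> 'a::real_vector"
  assumes "finite I" "I \<noteq> {}" "\<And>i. i \<in> I \<Longrightarrow> v i \<in> S"
  shows "(1 / real (card I)) *\<^sub>R (\<Sum>i\<in>I. v i) \<in> convex hull S"
proof -
  have "(1 / real (card I)) *\<^sub>R (\<Sum>i\<in>I. v i) = (\<Sum>i\<in>I. (1 / real (card I)) *\<^sub>R v i)"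
    by (simp add: scaleR_sum_right)
  also have "\<dots> \<in> convex hull S"
    by (rule convex_sum) (use assms in \<open>auto intro: hull_inc\<close>)
  finally show ?thesis .
qed

lemma bounded_range_mean:
  fixes x :: "nat \<Rightarrow> 'a::real_normed_vector" and w :: "nat \<Rightarrow> 'b \<Rightarrow> 'a"
  assumes "finite I" "I \<noteq> {}" "\<And>i. i \<in> I \<Longrightarrow> bounded {w n i | n. n \<ge> 1}"
    and "\<And>n. n \<ge> 1 \<Longrightarrow> x (Suc n) = (1 / real (card I)) *\<^sub>R (\<Sum>i\<in>I. w n i)"
  shows "bounded (range x)"
proof (rule bounded_range_if_eventually_in)
  show "bounded (convex hull (\<Union>i\<in>I. {w n i | n. n \<ge> 1}))"
    using assms(1,3) by (simp add: bounded_UN bounded_convex_hull)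
  show "eventually (\<lambda>n. x n \<in> convex hull (\<Union>i\<in>I. {w n i | n. n \<ge> 1})) sequentially"
  proof (rule eventually_sequentiallyI)
    fix n :: nat assume "n \<ge> 2"
    then obtain m where m: "n = Suc m" "m \<ge> 1"
      by (cases n) auto
    have "w m i \<in> (\<Union>i\<in>I. {w n i | n. n \<ge> 1})" if "i \<in> I" for i
      using that m(2) by blast
    then have "(1 / real (card I)) *\<^sub>R (\<Sum>i\<in>I. w m i) \<in> convex hull (\<Union>i\<in>I. {w n i | n. n \<ge> 1})"
      by (rule mean_in_convex_hull[OF assms(1,2)])
    then show "x n \<in> convex hull (\<Union>i\<in>I. {w n i | n. n \<ge> 1})"
      unfolding m(1) assms(4)[OF m(2)] .
  qed
qed

lemma bounded_range_extrapolation: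
  fixes x z :: "nat \<Rightarrow> 'a::real_normed_vector"
  assumes "bounded (range x)" "\<And>n. \<bar>\<theta> n\<bar> \<le> c"
    and "\<And>n. n \<ge> 1 \<Longrightarrow> z n = x n + \<theta> n *\<^sub>R (x n - x (n - 1))"
  shows "bounded (range z)"
proof -
  obtain B where B: "\<And>n. norm (x n) \<le> B"
    using assms(1) unfolding bounded_iff by blast
  have "eventually (\<lambda>n. z n \<in> cball 0 (B + c * (B + B))) sequentially"
  proof (rule eventually_sequentiallyI)
    fix n :: nat assume "n \<ge> 1"
    have "norm (x n - x (n - 1)) \<le> norm (x n) + norm (x (n - 1))"
      by (rule norm_triangle_ineq4)
    also have "\<dots> \<le> B + B"
      by (intro add_mono B)
    finally have "norm (x n - x (n - 1)) \<le> B + B" .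
    moreover have "0 \<le> c"
      using abs_ge_zero assms(2)[of n] by (rule order_trans)
    ultimately have "\<bar>\<theta> n\<bar> * norm (x n - x (n - 1)) \<le> c * (B + B)"
      using assms(2)[of n] by (intro mult_mono) auto
    then show "z n \<in> cball 0 (B + c * (B + B))"
      using B[of n] norm_triangle_ineq[of "x n" "\<theta> n *\<^sub>R (x n - x (n - 1))"] assms(3)[OF \<open>n \<ge> 1\<close>]
      by simp
  qed
  then show ?thesis
    by (rule bounded_range_if_eventually_in) simp
qed

lemma bdd_above_eventually_contractive:
  fixes r :: "nat \<Rightarrow> real"
  assumes "eventually (\<lambda>n. r (Suc n) \<le> K + q * r n) sequentially" "0 \<le> q" "q < 1"
  shows "bdd_above (range r)"
proof -
  obtain N where N: "\<And>n. n \<ge> N \<Longrightarrow> r (Suc n) \<le> K + q * r n"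
    using assms(1) unfolding eventually_sequentially by blast
  define C where "C = max (Max (r ` {..N})) (K / (1 - q))"
  have initial: "r n \<le> C" if "n \<le> N" for n
    using that unfolding C_def by (simp add: max.coboundedI1)
  have "r n \<le> C" if "n \<ge> N" for n
    using that
  proof (induction n rule: dec_induct)
    case base
    then show ?case using initial by simp
  next
    case (step n)
    have "K / (1 - q) \<le> C"
      unfolding C_def by simp
    then have "K \<le> C * (1 - q)"
      using assms(3) by (simp add: pos_divide_le_eq)
    then have "K + q * C \<le> C"
      by (simp add: algebra_simps)
    moreover have "q * r n \<le> q * C"
      using step.IH assms(2) by (rule mult_left_mono)
    ultimately show ?case
      using N[OF step.hyps(1)] by linarith
  qed
  with initial show ?thesis
    by (metis bdd_aboveI2 nle_le)
qed

lemma bounded_range_perturbed_recursion: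
  fixes d g :: "nat \<Rightarrow> 'a::real_normed_vector"
  assumes "bounded (range g)" "\<beta> \<longlonglongrightarrow> 0" "\<And>n. 0 \<le> \<beta> n"
    and "\<And>n. n \<ge> 1 \<Longrightarrow> d (Suc n) = g n + \<beta> n *\<^sub>R d n"
  shows "bounded (range d)"
proof -
  obtain K where K: "\<And>n. norm (g n) \<le> K"
    using assms(1) unfolding bounded_iff by blast
  have "eventually (\<lambda>n. \<beta> n < 1/2) sequentially"
    using order_tendstoD(2)[OF assms(2), of "1/2"] by simp
  then have "eventually (\<lambda>n. norm (d (Suc n)) \<le> K + 1/2 * norm (d n)) sequentially"
    using eventually_ge_at_top[of 1]
  proof eventually_elim
    case (elim n)
    have "norm (d (Suc n)) \<le> norm (g n) + \<beta> n * norm (d n)"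
      using assms(3)[of n] norm_triangle_ineq[of "g n" "\<beta> n *\<^sub>R d n"] assms(4) elim by simp
    also have "\<dots> \<le> K + 1/2 * norm (d n)"
      using K[of n] elim by (intro add_mono mult_right_mono) auto
    finally show ?case .
  qed
  then have "bdd_above (range (\<lambda>n. norm (d n)))"
    by (rule bdd_above_eventually_contractive) auto
  then show ?thesis
    unfolding bounded_iff bdd_above_def by auto
qed

theorem lemma5:
  fixes M :: nat
    and f h :: "nat \<Rightarrow> 'a::{real_inner, complete_space} \<Rightarrow> real"
    and gh :: "nat \<Rightarrow> 'a \<Rightarrow> 'a"
    and L :: "nat \<Rightarrow> real"
    and T :: "nat \<Rightarrow> 'a \<Rightarrow> 'a"
    and \<theta> lam \<beta> \<alpha> :: "nat \<Rightarrow> real"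
    and u :: "nat \<Rightarrow> 'a"
    and x z :: "nat \<Rightarrow> 'a"
    and d y w :: "nat \<Rightarrow> nat \<Rightarrow> 'a"
  assumes M: "M \<ge> 1"
    \<comment> \<open>(A1)\<close>
    and A1: "\<And>i. i \<in> {1..M} \<Longrightarrow> continuous_on UNIV (f i) \<and> convex_on UNIV (f i)"
    \<comment> \<open>(A2): gh i is the gradient of h i, (1/L i)-Lipschitz\<close>
    and A2_convex: "\<And>i. i \<in> {1..M} \<Longrightarrow> convex_on UNIV (h i)"
    and A2_grad: "\<And>i p. i \<in> {1..M} \<Longrightarrow> (h i has_derivative (\<lambda>v. inner (gh i p) v)) (at p)"
    and A2_L: "\<And>i. i \<in> {1..M} \<Longrightarrow> L i > 0"
    and A2_lip: "\<And>i p q. i \<in> {1..M} \<Longrightarrow> norm (gh i p - gh i q) \<le> (1 / L i) * norm (p - q)"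
    \<comment> \<open>(A3)\<close>
    and A3: "\<And>i. i \<in> {1..M} \<Longrightarrow> firmly_nonexpansive (T i)"
    \<comment> \<open>(A4)\<close>
    and A4_S: "(\<Inter>i\<in>{1..M}. {p. T i p = p}) \<noteq> {}"
    and A4_Omega: "\<exists>xh \<in> (\<Inter>i\<in>{1..M}. {p. T i p = p}).
        \<forall>p \<in> (\<Inter>i\<in>{1..M}. {p. T i p = p}).
          (\<Sum>i=1..M. f i xh + h i xh) \<le> (\<Sum>i=1..M. f i p + h i p)"
    \<comment> \<open>Condition (C)\<close>
    and dec: "decseq \<theta>" "decseq lam" "decseq \<beta>" "decseq \<alpha>"
    and lim0: "\<theta> \<longlonglongrightarrow> 0" "lam \<longlonglongrightarrow> 0" "\<beta> \<longlonglongrightarrow> 0" "\<alpha> \<longlonglongrightarrow> 0"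
    and \<theta>_range: "\<And>n. 0 \<le> \<theta> n \<and> \<theta> n < 1"
    and lam_range: "\<And>n. 0 < lam n \<and> lam n \<le> 2 * Min (L ` {1..M})"
    and \<beta>_range: "\<And>n. 0 < \<beta> n \<and> \<beta> n \<le> 1"
    and \<alpha>_range: "\<And>n. 0 < \<alpha> n \<and> \<alpha> n \<le> 1"
    and C1: "\<not> summable \<alpha>"
    and C2: "(\<lambda>n. (1 / \<alpha> (n+1)) * \<bar>1 / lam (n+1) - 1 / lam n\<bar>) \<longlonglongrightarrow> 0"
    and C3: "(\<lambda>n. (1 / lam (n+1)) * \<bar>1 - \<alpha> n / \<alpha> (n+1)\<bar>) \<longlonglongrightarrow> 0"
    and C4: "(\<lambda>n. \<alpha> n / lam n) \<longlonglongrightarrow> 0"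
    and C5: "(\<lambda>n. \<theta> n / (\<alpha> (n+1) * lam (n+1))) \<longlonglongrightarrow> 0"
    and C6: "\<exists>\<sigma>\<ge>1. \<forall>n. lam n / lam (n+1) \<le> \<sigma>"
    and C7: "(\<lambda>n. \<beta> n / \<alpha> (n+1)) \<longlonglongrightarrow> 0"
    \<comment> \<open>Algorithm (w n i stands for w^{(i+1)}_n)\<close>
    and d1: "\<And>i. i \<in> {1..M} \<Longrightarrow> d 1 i = - gh i (z 0)"
    and z_def: "\<And>n. n \<ge> 1 \<Longrightarrow> z n = x n + \<theta> n *\<^sub>R (x n - x (n - 1))"
    and d_def: "\<And>n i. n \<ge> 1 \<Longrightarrow> i \<in> {1..M} \<Longrightarrow>
                  d (n+1) i = - gh i (z n) + \<beta> n *\<^sub>R d n i"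
    and y_def: "\<And>n i. n \<ge> 1 \<Longrightarrow> i \<in> {1..M} \<Longrightarrow>
                  y n i = prox (lam n) (f i) (z n + lam n *\<^sub>R d (n+1) i)"
    and w_def: "\<And>n i. n \<ge> 1 \<Longrightarrow> i \<in> {1..M} \<Longrightarrow>
                  w n i = \<alpha> n *\<^sub>R u i + (1 - \<alpha> n) *\<^sub>R T i (y n i)"
    and x_def: "\<And>n. n \<ge> 1 \<Longrightarrow> x (n+1) = (1 / real M) *\<^sub>R (\<Sum>i=1..M. w n i)"
    \<comment> \<open>boundedness of the y-sequences\<close>
    and y_bdd: "\<And>i. i \<in> {1..M} \<Longrightarrow> bounded {y n i | n. n \<ge> 1}"
  shows "(\<forall>i\<in>{1..M}. bounded {T i (y n i) | n. n \<ge> 1})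
       \<and> bounded (range x)
       \<and> (\<forall>i\<in>{1..M}. bounded {w n i | n. n \<ge> 1})
       \<and> bounded (range z)
       \<and> (\<forall>i\<in>{1..M}. bounded {d n i | n. n \<ge> 1})"
proof -
  have Ty: "bounded {T i (y n i) | n. n \<ge> 1}" if i: "i \<in> {1..M}" for i
  proof -
    have "{T i (y n i) | n. n \<ge> 1} = T i ` {y n i | n. n \<ge> 1}" by blast
    then show ?thesis
      using lipschitz_on_bounded_image[OF firmly_nonexpansive_imp_lipschitz[OF A3[OF i]] y_bdd[OF i]]
      by simp
  qed
  have w: "bounded {w n i | n. n \<ge> 1}" if i: "i \<in> {1..M}" for i
  proof (rule bounded_convex_combination_seq)
    show "bounded {T i (y n i) | n. n \<ge> 1}"
      by (rule Ty[OF i])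
    show "\<alpha> n \<in> {0..1}" if "n \<ge> 1" for n
      using \<alpha>_range[of n] by simp
    show "w n i = \<alpha> n *\<^sub>R u i + (1 - \<alpha> n) *\<^sub>R T i (y n i)" if "n \<ge> 1" for n
      by (rule w_def[OF that i])
  qed
  have x: "bounded (range x)"
  proof (rule bounded_range_mean)
    show "bounded {w n i | n. n \<ge> 1}" if "i \<in> {1..M}" for i
      by (rule w[OF that])
    show "x (Suc n) = (1 / real (card {1..M})) *\<^sub>R (\<Sum>i\<in>{1..M}. w n i)" if "n \<ge> 1" for n
      using x_def[OF that] by simp
  qed (use M in simp_all)
  have z: "bounded (range z)"
  proof (rule bounded_range_extrapolation[OF x])
    show "\<bar>\<theta> n\<bar> \<le> 1" for n
      using \<theta>_range[of n] by simp
    show "z n = x n + \<theta> n *\<^sub>R (x n - x (n - 1))" if "n \<ge> 1" for n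
      by (rule z_def[OF that])
  qed
  have d: "bounded {d n i | n. n \<ge> 1}" if i: "i \<in> {1..M}" for i
  proof -
    have "(1 / L i)-lipschitz_on (range z) (gh i)"
      using A2_lip[OF i] A2_L[OF i] by (intro lipschitz_onI) (auto simp: dist_norm)
    then have "bounded (uminus ` gh i ` range z)"
      using lipschitz_on_bounded_image z by simp
    then have "bounded (range (\<lambda>n. - gh i (z n)))"
      by (simp add: image_image)
    then have "bounded (range (\<lambda>n. d n i))"
    proof (rule bounded_range_perturbed_recursion)
      show "\<beta> \<longlonglongrightarrow> 0" by (rule lim0(3))
      show "0 \<le> \<beta> n" for n
        using \<beta>_range[of n] by simp
      show "d (Suc n) i = - gh i (z n) + \<beta> n *\<^sub>R d n i" if "n \<ge> 1" for n
        using d_def[OF that i] by simp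
    qed
    then show ?thesis by (rule bounded_subset) blast
  qed
  show ?thesis
    using Ty w x z d by blast
qed

end
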